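(* Let $X$ be a type variable, $A$ and $G$ types of system $\mathcal F$, $O$ a type constant and $\alpha$ a term variable. Then $\alpha:O\vdash_{\mathcal F} T_A : A[G/X]\rightarrow A[G^o/X]$ and $\alpha:O\vdash_{\mathcal F} T'_A : A[G^o/X]\rightarrow A[G/X]$.
   Context: Types of system $\mathcal F$ are built from type variables and type constants (atomic, not quantifiable; $O$ is one) with $\rightarrow$, $\forall$; $A[G/X]$ is capture-avoiding substitution. Typing: (ax) $\Gamma \vdash x_i : A_i$ for $x_i:A_i\in\Gamma$; ($\rightarrow_i$) from $\Gamma, x:B \vdash t : C$ infer $\Gamma \vdash \lambda x t : B \rightarrow C$; ($\rightarrow_e$) from $\Gamma \vdash u : B\rightarrow C$, $\Gamma \vdash v : B$ infer $\Gamma \vdash (u)v : C$; ($\forall_i$) from $\Gamma \vdash t : A$, $Y$ not free in $\Gamma$, infer $\Gamma \vdash t : \forall Y A$; ($\forall_e$) from $\Gamma \vdash t : \forall Y A$ infer $\Gamma \vdash t : A[C/Y]$. For types $A,B$: $A\wedge B=\forall Z\{(A\rightarrow(B\rightarrow Z))\rightarrow Z\}$ ($Z$ not free in $A,B$), and $G^o$ denotes $O\rightarrow G\wedge O$. Let $\mathbf 1=\lambda x\lambda y\,x$. For a type $F$, the $\lambda$-terms $T_F,T'_F$ (depending on the fixed $X$ and $\alpha$; bound variables $x,y,\beta,g$ chosen distinct from $\alpha$) are defined by induction on $F$: if $X$ is not free in $F$, $T_F=T'_F=\lambda x\,x$; otherwise, if $F=X$, $T_F=\lambda x\lambda\beta\lambda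 g\,(g)x\alpha$ and $T'_F=\lambda x\,(x)\alpha\mathbf 1$; if $F=C\rightarrow D$, $T_F=\lambda x\lambda y\,(T_D)(x)(T'_C)y$ and $T'_F=\lambda x\lambda y\,(T'_D)(x)(T_C)y$; if $F=\forall Y B$, $T_F=\lambda x\,(T_B)x$ and $T'_F=\lambda x\,(T'_B)x$. *)

theory Defs
  imports Main
begin

text \<open>Type variables are de Bruijn indices; type constants are atomic names (not quantifiable).\<close>
datatype ty = TVar nat | TConst nat | Arr ty ty | All ty

fun liftT :: "nat \<Rightarrow> ty \<Rightarrow> ty" where
  "liftT k (TVar n) = (if n < k then TVar n else TVar (Suc n))"
| "liftT k (TConst c) = TConst c"
| "liftT k (Arr A B) = Arr (liftT k A) (liftT k B)"
| "liftT k (All A) = All (liftT (Suc k) A)"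

fun fvT :: "ty \<Rightarrow> nat set" where
  "fvT (TVar n) = {n}"
| "fvT (TConst c) = {}"
| "fvT (Arr A B) = fvT A \<union> fvT B"
| "fvT (All A) = (\<lambda>n. n - 1) ` (fvT A - {0})"

text \<open>Capture-avoiding substitution \<open>A[G/X]\<close> of \<open>G\<close> for the free type variable \<open>X\<close>;
  all other free variables are left unchanged (as in the named presentation).\<close>
fun substT :: "nat \<Rightarrow> ty \<Rightarrow> ty \<Rightarrow> ty" where
  "substT X G (TVar n) = (if n = X then G else TVar n)"
| "substT X G (TConst c) = TConst c"
| "substT X G (Arr A B) = Arr (substT X G A) (substT X G B)"
| "substT X G (All A) = All (substT (Suc X) (liftT 0 G) A)"

fun instT :: "nat \<Rightarrow> ty \<Rightarrow> ty \<Rightarrow> ty" where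
  "instT k C (TVar n) = (if n < k then TVar n else if n = k then C else TVar (n - 1))"
| "instT k C (TConst c) = TConst c"
| "instT k C (Arr A B) = Arr (instT k C A) (instT k C B)"
| "instT k C (All A) = All (instT (Suc k) (liftT 0 C) A)"

text \<open>\<open>A \<and> B = \<forall>Z ((A \<rightarrow> (B \<rightarrow> Z)) \<rightarrow> Z)\<close>, Z fresh (index 0).\<close>
definition conjT :: "ty \<Rightarrow> ty \<Rightarrow> ty" where
  "conjT A B = All (Arr (Arr (liftT 0 A) (Arr (liftT 0 B) (TVar 0))) (TVar 0))"

text \<open>\<open>G\<^sup>o = O \<rightarrow> G \<and> O\<close>, where O is the type constant named oc.\<close>
definition oT :: "nat \<Rightarrow> ty \<Rightarrow> ty" where
  "oT oc G = Arr (TConst oc) (conjT G (TConst oc))"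

datatype trm = Var nat | Lam nat trm | App trm trm

type_synonym ctx = "nat \<Rightarrow> ty option"

inductive typing :: "ctx \<Rightarrow> trm \<Rightarrow> ty \<Rightarrow> bool" where
  ax:   "\<Gamma> x = Some A \<Longrightarrow> typing \<Gamma> (Var x) A"
| arrI: "typing (\<Gamma>(x \<mapsto> B)) t C \<Longrightarrow> typing \<Gamma> (Lam x t) (Arr B C)"
| arrE: "typing \<Gamma> u (Arr B C) \<Longrightarrow> typing \<Gamma> v B \<Longrightarrow> typing \<Gamma> (App u v) C"
| allI: "typing (map_option (liftT 0) \<circ> \<Gamma>) t A \<Longrightarrow> typing \<Gamma> t (All A)"
| allE: "typing \<Gamma> t (All A) \<Longrightarrow> typing \<Gamma> t (instT 0 C A)"

text \<open>Bound variable names x, y, beta, g are chosen distinct from alpha (= a) and each other.\<close>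
definition vx :: "nat \<Rightarrow> nat" where "vx a = a + 1"
definition vy :: "nat \<Rightarrow> nat" where "vy a = a + 2"
definition vb :: "nat \<Rightarrow> nat" where "vb a = a + 3"
definition vg :: "nat \<Rightarrow> nat" where "vg a = a + 4"

definition idT :: "nat \<Rightarrow> trm" where "idT a = Lam (vx a) (Var (vx a))"

definition oneT :: "nat \<Rightarrow> trm" where "oneT a = Lam (vx a) (Lam (vy a) (Var (vx a)))"

fun TF :: "nat \<Rightarrow> nat \<Rightarrow> ty \<Rightarrow> trm" and TF' :: "nat \<Rightarrow> nat \<Rightarrow> ty \<Rightarrow> trm" where
  "TF X a (TVar n) = (if n = X then
      Lam (vx a) (Lam (vb a) (Lam (vg a) (App (App (Var (vg a)) (Var (vx a))) (Var a))))
    else idT a)"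
| "TF X a (TConst c) = idT a"
| "TF X a (Arr C D) = (if X \<notin> fvT (Arr C D) then idT a else
      Lam (vx a) (Lam (vy a) (App (TF X a D) (App (Var (vx a)) (App (TF' X a C) (Var (vy a)))))))"
| "TF X a (All B) = (if X \<notin> fvT (All B) then idT a else
      Lam (vx a) (App (TF (Suc X) a B) (Var (vx a))))"
| "TF' X a (TVar n) = (if n = X then
      Lam (vx a) (App (App (Var (vx a)) (Var a)) (oneT a))
    else idT a)"
| "TF' X a (TConst c) = idT a"
| "TF' X a (Arr C D) = (if X \<notin> fvT (Arr C D) then idT a else
      Lam (vx a) (Lam (vy a) (App (TF' X a D) (App (Var (vx a)) (App (TF X a C) (Var (vy a)))))))"
| "TF' X a (All B) = (if X \<notin> fvT (All B) then idT a else
      Lam (vx a) (App (TF' (Suc X) a B) (Var (vx a))))"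

end

theory Submission
  imports Defs
begin

text \<open>At \<open>X\<close> itself, \<open>T\<^sub>X\<close> pairs
  its argument with \<open>\<alpha> : O\<close> and \<open>T'\<^sub>X\<close> applies an element of \<open>G\<^sup>o\<close> to \<open>\<alpha>\<close> and projects with \<open>\<one>\<close>.
  An arrow is contravariant in its domain, which is why \<open>T\<close> and \<open>T'\<close> must be proved together;
  under a quantifier the argument is instantiated with the bound variable and the result
  generalised again. The context is generalised to any one assigning \<open>O\<close> to \<open>\<alpha>\<close>, so that it
  survives lifting in rule \<open>\<forall>\<^sub>i\<close>.\<close>

lemma substT_fresh: "X \<notin> fvT A \<Longrightarrow> substT X G A = A"
proof (induction A arbitrary: X G)
  case (All A)
  have "Suc X \<notin> fvT A"
  proof
    assume "Suc X \<in> fvT A"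
    then have "X \<in> (\<lambda>n. n - 1) ` (fvT A - {0})"
      by (metis Diff_iff diff_Suc_1 image_eqI nat.distinct(1) singletonD)
    with All.prems show False by simp
  qed
  then show ?case using All.IH by simp
qed auto

lemma instT_liftT: "instT k C (liftT k A) = A"
  by (induction A arbitrary: k C) auto

lemma instT_TVar_liftT_Suc: "instT k (TVar k) (liftT (Suc k) A) = A"
  by (induction A arbitrary: k) auto

lemma liftT_liftT: "i \<le> k \<Longrightarrow> liftT (Suc k) (liftT i A) = liftT i (liftT k A)"
  by (induction A arbitrary: i k) auto

lemma liftT_oT: "liftT 0 (oT oc G) = oT oc (liftT 0 G)"
  by (simp add: oT_def conjT_def liftT_liftT)

lemma typing_idT: "typing \<Gamma> (idT a) (Arr A A)"
  unfolding idT_def by (auto intro!: typing.arrI typing.ax)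

lemma typing_TF_var:
  assumes "\<Gamma> a = Some (TConst oc)"
  shows "typing \<Gamma> (TF X a (TVar X)) (Arr G (oT oc G))"
proof -
  let ?G = "liftT 0 G"
  let ?\<Theta> = "(map_option (liftT 0) \<circ> \<Gamma>(vx a \<mapsto> G, vb a \<mapsto> TConst oc))
                (vg a \<mapsto> Arr ?G (Arr (TConst oc) (TVar 0)))"
  have "typing ?\<Theta> (Var (vg a)) (Arr ?G (Arr (TConst oc) (TVar 0)))"
       "typing ?\<Theta> (Var (vx a)) ?G"
       "typing ?\<Theta> (Var a) (TConst oc)"
    using assms by (auto intro!: typing.ax simp: vx_def vb_def vg_def)
  then have "typing ?\<Theta> (App (App (Var (vg a)) (Var (vx a))) (Var a)) (TVar 0)"
    by (blast intro: typing.arrE)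
  then show ?thesis
    by (auto simp: oT_def conjT_def intro!: typing.arrI typing.allI)
qed

lemma typing_TF'_var:
  assumes "\<Gamma> a = Some (TConst oc)"
  shows "typing \<Gamma> (TF' X a (TVar X)) (Arr (oT oc G) G)"
proof -
  let ?\<Delta> = "\<Gamma>(vx a \<mapsto> oT oc G)"
  have "typing ?\<Delta> (App (Var (vx a)) (Var a)) (conjT G (TConst oc))"
    using assms by (auto intro!: typing.arrE[where B = "TConst oc"] typing.ax
        simp: vx_def oT_def)
  then have "typing ?\<Delta> (App (Var (vx a)) (Var a)) (Arr (Arr G (Arr (TConst oc) G)) G)"
    using typing.allE[where C = G] by (fastforce simp: conjT_def instT_liftT)
  moreover have "typing ?\<Delta> (oneT a) (Arr G (Arr (TConst oc) G))"
    unfolding oneT_def by (auto intro!: typing.arrI typing.ax simp: vx_def vy_def)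
  ultimately have "typing ?\<Delta> (App (App (Var (vx a)) (Var a)) (oneT a)) G"
    by (rule typing.arrE)
  then show ?thesis
    by (simp add: typing.arrI)
qed

lemma typing_arrow_map:
  assumes "typing (\<Gamma>(vx a \<mapsto> Arr B C, vy a \<mapsto> B')) r (Arr B' B)"
    and "typing (\<Gamma>(vx a \<mapsto> Arr B C, vy a \<mapsto> B')) s (Arr C C')"
  shows "typing \<Gamma> (Lam (vx a) (Lam (vy a) (App s (App (Var (vx a)) (App r (Var (vy a)))))))
           (Arr (Arr B C) (Arr B' C'))"
proof -
  let ?\<Delta> = "\<Gamma>(vx a \<mapsto> Arr B C, vy a \<mapsto> B')"
  have "typing ?\<Delta> (Var (vx a)) (Arr B C)" "typing ?\<Delta> (Var (vy a)) B'"
    by (auto intro!: typing.ax simp: vx_def vy_def)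
  with assms show ?thesis
    by (blast intro: typing.arrI typing.arrE)
qed

lemma typing_forall_map:
  assumes "typing (map_option (liftT 0) \<circ> \<Gamma>(vx a \<mapsto> All B)) s (Arr B B')"
  shows "typing \<Gamma> (Lam (vx a) (App s (Var (vx a)))) (Arr (All B) (All B'))"
proof -
  let ?\<Delta> = "map_option (liftT 0) \<circ> \<Gamma>(vx a \<mapsto> All B)"
  have "typing ?\<Delta> (Var (vx a)) (All (liftT (Suc 0) B))"
    by (rule typing.ax) simp
  then have "typing ?\<Delta> (Var (vx a)) B"
    using typing.allE[where C = "TVar 0"] instT_TVar_liftT_Suc by metis
  with assms show ?thesis
    by (blast intro: typing.arrI typing.allI typing.arrE)
qed

lemma typing_TF_TF':
  assumes "\<Gamma> a = Some (TConst oc)"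
  shows "typing \<Gamma> (TF X a A) (Arr (substT X G A) (substT X (oT oc G) A))
       \<and> typing \<Gamma> (TF' X a A) (Arr (substT X (oT oc G) A) (substT X G A))"
  using assms
proof (induction A arbitrary: \<Gamma> X G)
  case (TVar n)
  show ?case
  proof (cases "n = X")
    case True
    with typing_TF_var[of \<Gamma> a oc X G] typing_TF'_var[of \<Gamma> a oc X G] TVar.prems
    show ?thesis
      by simp
  qed (simp add: typing_idT)
next
  case (TConst c)
  then show ?case by (simp add: typing_idT)
next
  case (Arr C D)
  show ?case
  proof (cases "X \<in> fvT (Arr C D)")
    case True
    have "(\<Gamma>(vx a \<mapsto> B, vy a \<mapsto> B')) a = Some (TConst oc)" for B B'
      using Arr.prems by (simp add: vx_def vy_def)
    with Arr.IH True show ?thesis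
      by (simp add: typing_arrow_map)
  next
    case False
    with substT_fresh[OF False] show ?thesis
      by (simp add: typing_idT del: fvT.simps substT.simps)
  qed
next
  case (All B)
  show ?case
  proof (cases "X \<in> fvT (All B)")
    case True
    let ?\<Delta> = "\<lambda>B'. map_option (liftT 0) \<circ> \<Gamma>(vx a \<mapsto> B')"
    have "?\<Delta> B' a = Some (TConst oc)" for B'
      using All.prems by (simp add: vx_def)
    then have IH: "typing (?\<Delta> B') (TF (Suc X) a B)
                 (Arr (substT (Suc X) (liftT 0 G) B) (substT (Suc X) (liftT 0 (oT oc G)) B))"
      "typing (?\<Delta> B') (TF' (Suc X) a B)
                 (Arr (substT (Suc X) (liftT 0 (oT oc G)) B) (substT (Suc X) (liftT 0 G) B))"
      for B'
      using All.IH[where X = "Suc X" and G = "liftT 0 G"] by (simp_all add: liftT_oT)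
    from True show ?thesis
      by (simp only: TF.simps TF'.simps substT.simps not_True_eq_False if_False)
        (intro conjI typing_forall_map IH)
  next
    case False
    with substT_fresh[OF False] show ?thesis
      by (simp add: typing_idT del: fvT.simps substT.simps)
  qed
qed

theorem lemma3p1:
  fixes X :: nat and A G :: ty and oc :: nat and a :: nat
  shows "typing (Map.empty(a \<mapsto> TConst oc)) (TF X a A)
           (Arr (substT X G A) (substT X (oT oc G) A))
       \<and> typing (Map.empty(a \<mapsto> TConst oc)) (TF' X a A)
           (Arr (substT X (oT oc G) A) (substT X G A))"
  by (rule typing_TF_TF') simp

end
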